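(* Let $k\in\mathbb N$ and let $\mathbb D_0=(D_0,V_0)$, $\mathbb D_1=(D_1,V_1)$ be monadic models. The following are equivalent: (1) $\mathbb D_0$ and $\mathbb D_1$ satisfy exactly the same $\mathrm{FOE}^\infty(A)$-sentences of quantifier rank at most $k$; (2) $\mathbb D_0\sim^\infty_k\mathbb D_1$; (3) player $\exists$ has a winning strategy in the game $\mathrm{EF}^\infty_k(\mathbb D_0,\mathbb D_1)$.
   Context: Fix a finite set $A$ of unary predicate symbols. A monadic model is a pair $(D,V)$ with $D$ a set (possibly empty) and $V:A\to\wp(D)$. $\mathrm{FOE}^\infty(A)$ is monadic first-order logic with equality over $A$ extended with the quantifiers $\exists^\infty$ ("there are infinitely many") and $\forall^\infty$ ("all but finitely many"), formulas in negation normal form. On nonempty models the semantics is standard; on the empty model a sentence $Qx.\varphi$ is false for $Q\in\{\exists,\exists^\infty\}$ and true for $Q\in\{\forall,\forall^\infty\}$. Quantifier rank counts nested quantifiers of all four kinds. For $S\subseteq A$, $|S|_{\mathbb D}$ is the number of elements $d$ with $\{a:d\in V(a)\}=S$. The relation $\sim^\infty_0$ relates all models; for $k\ge1$, $\mathbb D\sim^\infty_k\mathbb D'$ iff for every $S\subseteq A$: $|S|_{\mathbb D}=|S|_{\mathbb D'}<k$, or $k\le|S|_{\mathbb D},|S|_{\mathbb D'}<\omega$, or both $|S|_{\mathbb D},|S|_{\mathbb D'}$ are infinite. A partial isomorphism is an injective partial map $f:D_0\rightharpoonup D_1$ with $d\in V_0(a)\iff f(d)\in V_1(a)$ for all $a$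 and $d$ in its domain. The game $\mathrm{EF}^\infty_k(\mathbb D_0,\mathbb D_1)$ has $k$ rounds, positions being pairs of equal-length sequences $\vec s_0,\vec s_1$ (initially empty). In each round $\forall$ chooses either (a) a second-order move: $\forall$ picks an infinite $X_i\subseteq D_i$ in one model, $\exists$ responds with an infinite $X_{1-i}\subseteq D_{1-i}$, $\forall$ picks $d_{1-i}\in X_{1-i}$, and $\exists$ responds with $d_i\in X_i$; or (b) a first-order move: $\forall$ picks $d_i\in D_i$ and $\exists$ responds with $d_{1-i}\in D_{1-i}$. The sequences are extended by $d_0$ resp. $d_1$; $\exists$ survives the round if she is not stuck and the map $\vec s_0\mapsto\vec s_1$ (componentwise) is a well-defined partial isomorphism; she wins if she survives all $k$ rounds. *)

theory Defs
  imports Main "HOL-Library.Extended_Nat"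
begin

text \<open>The finite set A of unary predicate symbols is rendered as a finite type 'a.\<close>

definition monadic_model :: "'d set \<Rightarrow> ('a \<Rightarrow> 'd set) \<Rightarrow> bool" where
  "monadic_model D V \<longleftrightarrow> (\<forall>a. V a \<subseteq> D)"

datatype 'a fml =
    FTrue
  | FFalse
  | Pred 'a nat
  | NPred 'a nat
  | Eq nat nat
  | NEq nat nat
  | Conj "'a fml" "'a fml"
  | Disj "'a fml" "'a fml"
  | Ex nat "'a fml"
  | All nat "'a fml"
  | ExInf nat "'a fml"
  | AllInf nat "'a fml"

fun fv :: "'a fml \<Rightarrow> nat set" where
  "fv FTrue = {}"
| "fv FFalse = {}"
| "fv (Pred a x) = {x}"
| "fv (NPred a x) = {x}"
| "fv (Eq x y) = {x, y}"
| "fv (NEq x y) = {x, y}"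
| "fv (Conj p q) = fv p \<union> fv q"
| "fv (Disj p q) = fv p \<union> fv q"
| "fv (Ex x p) = fv p - {x}"
| "fv (All x p) = fv p - {x}"
| "fv (ExInf x p) = fv p - {x}"
| "fv (AllInf x p) = fv p - {x}"

definition sentence :: "'a fml \<Rightarrow> bool" where
  "sentence p \<longleftrightarrow> fv p = {}"

fun qr :: "'a fml \<Rightarrow> nat" where
  "qr FTrue = 0"
| "qr FFalse = 0"
| "qr (Pred a x) = 0"
| "qr (NPred a x) = 0"
| "qr (Eq x y) = 0"
| "qr (NEq x y) = 0"
| "qr (Conj p q) = max (qr p) (qr q)"
| "qr (Disj p q) = max (qr p) (qr q)"
| "qr (Ex x p) = Suc (qr p)"
| "qr (All x p) = Suc (qr p)"
| "qr (ExInf x p) = Suc (qr p)"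
| "qr (AllInf x p) = Suc (qr p)"

text \<open>Semantics relative to an assignment g.  Quantifiers range over D, so on the
  empty model the existential quantifiers are false and the universal ones true.\<close>

fun eval :: "'d set \<Rightarrow> ('a \<Rightarrow> 'd set) \<Rightarrow> (nat \<Rightarrow> 'd) \<Rightarrow> 'a fml \<Rightarrow> bool" where
  "eval D V g FTrue = True"
| "eval D V g FFalse = False"
| "eval D V g (Pred a x) = (g x \<in> V a)"
| "eval D V g (NPred a x) = (g x \<notin> V a)"
| "eval D V g (Eq x y) = (g x = g y)"
| "eval D V g (NEq x y) = (g x \<noteq> g y)"
| "eval D V g (Conj p q) = (eval D V g p \<and> eval D V g q)"
| "eval D V g (Disj p q) = (eval D V g p \<or> eval D V g q)"
| "eval D V g (Ex x p) = (\<exists>d\<in>D. eval D V (g(x := d)) p)"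
| "eval D V g (All x p) = (\<forall>d\<in>D. eval D V (g(x := d)) p)"
| "eval D V g (ExInf x p) = infinite {d\<in>D. eval D V (g(x := d)) p}"
| "eval D V g (AllInf x p) = finite {d\<in>D. \<not> eval D V (g(x := d)) p}"

text \<open>Truth of a sentence (for sentences the assignment is irrelevant).\<close>

definition sat :: "'d set \<Rightarrow> ('a \<Rightarrow> 'd set) \<Rightarrow> 'a fml \<Rightarrow> bool" where
  "sat D V p \<longleftrightarrow> (\<forall>g. eval D V g p)"

definition type_count :: "'d set \<Rightarrow> ('a \<Rightarrow> 'd set) \<Rightarrow> 'a set \<Rightarrow> enat" where
  "type_count D V S =
     (let X = {d\<in>D. {a. d \<in> V a} = S} in if finite X then enat (card X) else \<infinity>)"

definition sim_inf ::
  "nat \<Rightarrow> 'd set \<Rightarrow> ('a \<Rightarrow> 'd set) \<Rightarrow> 'e set \<Rightarrow> ('a \<Rightarrow> 'e set) \<Rightarrow> bool" where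
  "sim_inf k D0 V0 D1 V1 \<longleftrightarrow>
     (k = 0 \<or>
      (\<forall>S. let c0 = type_count D0 V0 S; c1 = type_count D1 V1 S in
         (c0 = c1 \<and> c0 < enat k)
       \<or> (enat k \<le> c0 \<and> c0 < \<infinity> \<and> enat k \<le> c1 \<and> c1 < \<infinity>)
       \<or> (c0 = \<infinity> \<and> c1 = \<infinity>)))"

definition part_iso :: "('a \<Rightarrow> 'd set) \<Rightarrow> ('a \<Rightarrow> 'e set) \<Rightarrow> 'd list \<Rightarrow> 'e list \<Rightarrow> bool" where
  "part_iso V0 V1 s0 s1 \<longleftrightarrow> length s0 = length s1 \<and>
     (\<forall>i<length s0. \<forall>j<length s0. (s0 ! i = s0 ! j \<longleftrightarrow> s1 ! i = s1 ! j)) \<and>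
     (\<forall>i<length s0. \<forall>a. (s0 ! i \<in> V0 a \<longleftrightarrow> s1 ! i \<in> V1 a))"

text \<open>ewins n s0 s1: player \<exists> has a winning strategy in the remaining n rounds of
  the game EF-infinity starting from position (s0, s1).  Since the game is finite and
  of perfect information, having a winning strategy is characterised by backward
  induction on the number of remaining rounds: for every move of \<forall> (first-order
  or second-order, in either model) \<exists> has a response after which she survives the
  round and still wins the remaining game.\<close>

fun ewins :: "'d set \<Rightarrow> ('a \<Rightarrow> 'd set) \<Rightarrow> 'e set \<Rightarrow> ('a \<Rightarrow> 'e set) \<Rightarrow>
    nat \<Rightarrow> 'd list \<Rightarrow> 'e list \<Rightarrow> bool" where
  "ewins D0 V0 D1 V1 0 s0 s1 = True"
| "ewins D0 V0 D1 V1 (Suc n) s0 s1 =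
    (let good = (\<lambda>d0 d1. part_iso V0 V1 (s0 @ [d0]) (s1 @ [d1])
                          \<and> ewins D0 V0 D1 V1 n (s0 @ [d0]) (s1 @ [d1])) in
      \<comment> \<open>first-order move in D0\<close>
      (\<forall>d0\<in>D0. \<exists>d1\<in>D1. good d0 d1) \<and>
      \<comment> \<open>first-order move in D1\<close>
      (\<forall>d1\<in>D1. \<exists>d0\<in>D0. good d0 d1) \<and>
      \<comment> \<open>second-order move starting in D0\<close>
      (\<forall>X0. X0 \<subseteq> D0 \<and> infinite X0 \<longrightarrow>
         (\<exists>X1. X1 \<subseteq> D1 \<and> infinite X1 \<and> (\<forall>d1\<in>X1. \<exists>d0\<in>X0. good d0 d1))) \<and>
      \<comment> \<open>second-order move starting in D1\<close>
      (\<forall>X1. X1 \<subseteq> D1 \<and> infinite X1 \<longrightarrow>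
         (\<exists>X0. X0 \<subseteq> D0 \<and> infinite X0 \<and> (\<forall>d0\<in>X0. \<exists>d1\<in>X1. good d0 d1))))"

definition EF_inf_exists_wins ::
  "nat \<Rightarrow> 'd set \<Rightarrow> ('a \<Rightarrow> 'd set) \<Rightarrow> 'e set \<Rightarrow> ('a \<Rightarrow> 'e set) \<Rightarrow> bool" where
  "EF_inf_exists_wins k D0 V0 D1 V1 \<longleftrightarrow> ewins D0 V0 D1 V1 k [] []"

end

theory Submission
  imports Defs
begin

text \<open>
  (2) \<Rightarrow> (3): player \<exists> maintains the invariant that the positions form a partial
  isomorphism and that the parts of the two models not yet played are
  \<open>\<sim>\<^sup>\<infinity>\<^sub>n\<close>-related, n being the number of remaining rounds.  A first-order move is answered by
  an element of the same type; for a second-order move on an infinite set X, by pigeonhole some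
  type S is realised infinitely often in X, and \<exists> answers with the whole (infinite) class of S
  in the other model.
  (3) \<Rightarrow> (1): by induction on formulas, a winning position transfers truth of every formula
  of small enough rank; the second-order moves are exactly what is needed for \<open>\<exists>\<^sup>\<infinity>\<close> and \<open>\<forall>\<^sup>\<infinity>\<close>.
  (1) \<Rightarrow> (2): the numbers \<open>|S|\<close> are determined up to \<open>\<sim>\<^sup>\<infinity>\<^sub>k\<close> by the sentences ``there are at
  least m elements of type S'' (rank m \<le> k) and ``there are infinitely many elements of type S''
  (rank 1).
\<close>

definition atom_type :: "('a \<Rightarrow> 'd set) \<Rightarrow> 'd \<Rightarrow> 'a set" where
  "atom_type V d = {a. d \<in> V a}"

definition type_set :: "'d set \<Rightarrow> ('a \<Rightarrow> 'd set) \<Rightarrow> 'a set \<Rightarrow> 'd set" where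
  "type_set D V S = {d\<in>D. atom_type V d = S}"

definition count_equiv :: "nat \<Rightarrow> 'd set \<Rightarrow> 'e set \<Rightarrow> bool" where
  "count_equiv k A B \<longleftrightarrow>
     (finite A \<and> finite B \<and> (card A = card B \<or> k \<le> card A \<and> k \<le> card B))
   \<or> (infinite A \<and> infinite B)"

lemma sim_inf_iff_count_equiv:
  "sim_inf k D0 V0 D1 V1 \<longleftrightarrow>
     k = 0 \<or> (\<forall>S. count_equiv k (type_set D0 V0 S) (type_set D1 V1 S))"
proof -
  have "(let c0 = type_count D0 V0 S; c1 = type_count D1 V1 S in
           (c0 = c1 \<and> c0 < enat k)
         \<or> (enat k \<le> c0 \<and> c0 < \<infinity> \<and> enat k \<le> c1 \<and> c1 < \<infinity>)
         \<or> (c0 = \<infinity> \<and> c1 = \<infinity>))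
        \<longleftrightarrow> count_equiv k (type_set D0 V0 S) (type_set D1 V1 S)" for S
    unfolding type_count_def type_set_def atom_type_def count_equiv_def Let_def
    by auto
  then show ?thesis unfolding sim_inf_def by simp
qed

lemma count_equiv_Suc_imp: "count_equiv (Suc k) A B \<Longrightarrow> count_equiv k A B"
  unfolding count_equiv_def by auto

lemma count_equiv_sym: "count_equiv k A B \<Longrightarrow> count_equiv k B A"
  unfolding count_equiv_def by auto

lemma count_equiv_infinite: "count_equiv k A B \<Longrightarrow> infinite A \<Longrightarrow> infinite B"
  unfolding count_equiv_def by auto

lemma count_equiv_Suc_nonempty: "count_equiv (Suc k) A B \<Longrightarrow> a \<in> A \<Longrightarrow> B \<noteq> {}"
  unfolding count_equiv_def by auto

lemma count_equiv_Suc_Diff: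
  "count_equiv (Suc k) A B \<Longrightarrow> a \<in> A \<Longrightarrow> b \<in> B \<Longrightarrow> count_equiv k (A - {a}) (B - {b})"
  unfolding count_equiv_def by (auto simp: card_Diff_singleton)

lemma count_equivI:
  assumes "infinite A \<longleftrightarrow> infinite B"
    and "\<And>m. m \<le> k \<Longrightarrow> infinite A \<or> m \<le> card A \<longleftrightarrow> infinite B \<or> m \<le> card B"
  shows "count_equiv k A B"
proof (cases "finite A")
  case True
  with assms(1) have "finite B" by blast
  have "card A = card B" if "card A < k \<or> card B < k"
    using that assms(2)[of "Suc (card A)"] assms(2)[of "Suc (card B)"]
      assms(2)[of "card A"] assms(2)[of "card B"] \<open>finite A\<close> \<open>finite B\<close>
    by linarith
  with True \<open>finite B\<close> show ?thesis
    unfolding count_equiv_def by (meson not_le)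
qed (use assms(1) in \<open>auto simp: count_equiv_def\<close>)

lemma sim_inf_Suc_imp: "sim_inf (Suc k) D0 V0 D1 V1 \<Longrightarrow> sim_inf k D0 V0 D1 V1"
  unfolding sim_inf_iff_count_equiv using count_equiv_Suc_imp by blast

lemma sim_inf_sym: "sim_inf k D0 V0 D1 V1 \<Longrightarrow> sim_inf k D1 V1 D0 V0"
  unfolding sim_inf_iff_count_equiv using count_equiv_sym by blast

lemma type_set_Diff_insert:
  "type_set (D - insert d X) V S =
     (if atom_type V d = S then type_set (D - X) V S - {d} else type_set (D - X) V S)"
  unfolding type_set_def by auto

lemma infinite_ex_infinite_atom_type:
  fixes V :: "'a::finite \<Rightarrow> 'd set"
  assumes "infinite X"
  shows "\<exists>S. infinite {d\<in>X. atom_type V d = S}"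
proof (rule ccontr)
  assume "\<not> ?thesis"
  then have "finite (\<Union>S. {d\<in>X. atom_type V d = S})" by auto
  moreover have "(\<Union>S. {d\<in>X. atom_type V d = S}) = X" by auto
  ultimately show False using assms by simp
qed

lemma part_iso_sym: "part_iso V0 V1 s0 s1 \<Longrightarrow> part_iso V1 V0 s1 s0"
  unfolding part_iso_def by auto

lemma part_iso_snoc:
  assumes "part_iso V0 V1 s0 s1"
    and "\<forall>i<length s0. s0 ! i = d0 \<longleftrightarrow> s1 ! i = d1"
    and "atom_type V0 d0 = atom_type V1 d1"
  shows "part_iso V0 V1 (s0 @ [d0]) (s1 @ [d1])"
proof -
  have "\<forall>a. d0 \<in> V0 a \<longleftrightarrow> d1 \<in> V1 a"
    using assms(3) unfolding atom_type_def by blast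
  with assms(1,2) show ?thesis
    unfolding part_iso_def by (auto simp: nth_append less_Suc_eq)
qed

section \<open>Back-and-forth conditions\<close>

definition forth :: "('d \<Rightarrow> 'e \<Rightarrow> bool) \<Rightarrow> 'd set \<Rightarrow> 'e set \<Rightarrow> bool" where
  "forth G D0 D1 \<longleftrightarrow>
     (\<forall>d0\<in>D0. \<exists>d1\<in>D1. G d0 d1) \<and>
     (\<forall>X0. X0 \<subseteq> D0 \<and> infinite X0 \<longrightarrow>
        (\<exists>X1. X1 \<subseteq> D1 \<and> infinite X1 \<and> (\<forall>d1\<in>X1. \<exists>d0\<in>X0. G d0 d1)))"

definition back_and_forth :: "('d \<Rightarrow> 'e \<Rightarrow> bool) \<Rightarrow> 'd set \<Rightarrow> 'e set \<Rightarrow> bool" where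
  "back_and_forth G D0 D1 \<longleftrightarrow> forth G D0 D1 \<and> forth (\<lambda>d1 d0. G d0 d1) D1 D0"

lemma ewins_Suc_iff_back_and_forth:
  "ewins D0 V0 D1 V1 (Suc n) s0 s1 \<longleftrightarrow>
     back_and_forth (\<lambda>d0 d1. part_iso V0 V1 (s0 @ [d0]) (s1 @ [d1])
                              \<and> ewins D0 V0 D1 V1 n (s0 @ [d0]) (s1 @ [d1])) D0 D1"
  by (simp only: ewins.simps Let_def back_and_forth_def forth_def conj_ac)

lemma forth_mono: "forth G D0 D1 \<Longrightarrow> (\<And>d0 d1. G d0 d1 \<Longrightarrow> H d0 d1) \<Longrightarrow> forth H D0 D1"
  unfolding forth_def by meson

lemma back_and_forth_mono:
  "back_and_forth G D0 D1 \<Longrightarrow> (\<And>d0 d1. G d0 d1 \<Longrightarrow> H d0 d1) \<Longrightarrow> back_and_forth H D0 D1"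
  unfolding back_and_forth_def
  using forth_mono[of G D0 D1 H] forth_mono[of "\<lambda>d1 d0. G d0 d1" D1 D0 "\<lambda>d1 d0. H d0 d1"]
  by blast

lemma forth_transfers:
  assumes "forth G D0 D1" and "\<And>d0 d1. G d0 d1 \<Longrightarrow> P0 d0 \<Longrightarrow> P1 d1"
  shows forth_transfers_ex: "(\<exists>d\<in>D0. P0 d) \<Longrightarrow> (\<exists>d\<in>D1. P1 d)"
    and forth_transfers_infinite: "infinite {d\<in>D0. P0 d} \<Longrightarrow> infinite {d\<in>D1. P1 d}"
proof -
  show "\<exists>d\<in>D1. P1 d" if "\<exists>d\<in>D0. P0 d"
  proof -
    from that obtain d0 where "d0 \<in> D0" "P0 d0" by blast
    moreover from \<open>d0 \<in> D0\<close> obtain d1 where "d1 \<in> D1" "G d0 d1"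
      using assms(1) unfolding forth_def by blast
    ultimately show ?thesis using assms(2) by blast
  qed
  assume "infinite {d\<in>D0. P0 d}"
  then obtain X1 where "X1 \<subseteq> D1" "infinite X1" "\<forall>d1\<in>X1. \<exists>d0\<in>{d\<in>D0. P0 d}. G d0 d1"
    using assms(1) unfolding forth_def by (metis (no_types, lifting) mem_Collect_eq subsetI)
  with assms(2) have "X1 \<subseteq> {d\<in>D1. P1 d}" by blast
  with \<open>infinite X1\<close> show "infinite {d\<in>D1. P1 d}" using infinite_super by blast
qed

text \<open>Each quantifier is transferred by one direction applied to the formula or its negation.\<close>

lemma back_and_forth_quantifiers:
  assumes "back_and_forth (\<lambda>d0 d1. P0 d0 = P1 d1) D0 D1"
  shows "(\<exists>d\<in>D0. P0 d) = (\<exists>d\<in>D1. P1 d)"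
    and "(\<forall>d\<in>D0. P0 d) = (\<forall>d\<in>D1. P1 d)"
    and "infinite {d\<in>D0. P0 d} = infinite {d\<in>D1. P1 d}"
    and "finite {d\<in>D0. \<not> P0 d} = finite {d\<in>D1. \<not> P1 d}"
proof -
  have fw: "forth (\<lambda>d0 d1. P0 d0 = P1 d1) D0 D1"
    and bw: "forth (\<lambda>d1 d0. P1 d1 = P0 d0) D1 D0"
    using assms unfolding back_and_forth_def by (simp_all add: eq_commute)
  note fw_ex = forth_transfers_ex[OF fw] and bw_ex = forth_transfers_ex[OF bw]
  note fw_inf = forth_transfers_infinite[OF fw] and bw_inf = forth_transfers_infinite[OF bw]
  show "(\<exists>d\<in>D0. P0 d) = (\<exists>d\<in>D1. P1 d)"
    using fw_ex[of P0 P1] bw_ex[of P1 P0] by blast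
  show "(\<forall>d\<in>D0. P0 d) = (\<forall>d\<in>D1. P1 d)"
    using fw_ex[of "Not \<circ> P0" "Not \<circ> P1"] bw_ex[of "Not \<circ> P1" "Not \<circ> P0"] by auto
  show "infinite {d\<in>D0. P0 d} = infinite {d\<in>D1. P1 d}"
    using fw_inf[of P0 P1] bw_inf[of P1 P0] by blast
  show "finite {d\<in>D0. \<not> P0 d} = finite {d\<in>D1. \<not> P1 d}"
    using fw_inf[of "\<lambda>d. \<not> P0 d" "\<lambda>d. \<not> P1 d"] bw_inf[of "\<lambda>d. \<not> P1 d" "\<lambda>d. \<not> P0 d"] by auto
qed

section \<open>Counting equivalence gives a winning strategy\<close>

definition sim_position ::
  "nat \<Rightarrow> 'd set \<Rightarrow> ('a \<Rightarrow> 'd set) \<Rightarrow> 'e set \<Rightarrow> ('a \<Rightarrow> 'e set) \<Rightarrow> 'd list \<Rightarrow> 'e list \<Rightarrow> bool"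
where
  "sim_position n D0 V0 D1 V1 s0 s1 \<longleftrightarrow>
     part_iso V0 V1 s0 s1 \<and> set s0 \<subseteq> D0 \<and> set s1 \<subseteq> D1 \<and>
     sim_inf n (D0 - set s0) V0 (D1 - set s1) V1"

lemma sim_position_sym:
  "sim_position n D0 V0 D1 V1 s0 s1 \<Longrightarrow> sim_position n D1 V1 D0 V0 s1 s0"
  unfolding sim_position_def using part_iso_sym sim_inf_sym by blast

lemma sim_position_snoc_fresh:
  assumes pos: "sim_position (Suc n) D0 V0 D1 V1 s0 s1"
    and "d0 \<in> D0 - set s0" "d1 \<in> D1 - set s1"
    and same_type: "atom_type V0 d0 = atom_type V1 d1"
  shows "sim_position n D0 V0 D1 V1 (s0 @ [d0]) (s1 @ [d1])"
proof -
  have iso: "part_iso V0 V1 s0 s1"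
    and counts: "\<And>S. count_equiv (Suc n) (type_set (D0 - set s0) V0 S) (type_set (D1 - set s1) V1 S)"
    using pos unfolding sim_position_def sim_inf_iff_count_equiv by auto
  have "\<forall>i<length s0. s0 ! i \<noteq> d0 \<and> s1 ! i \<noteq> d1"
    using assms(2,3) iso unfolding part_iso_def by (auto dest: nth_mem)
  then have "part_iso V0 V1 (s0 @ [d0]) (s1 @ [d1])"
    using part_iso_snoc[OF iso _ same_type] by blast
  moreover have "count_equiv n (type_set (D0 - set (s0 @ [d0])) V0 S)
                               (type_set (D1 - set (s1 @ [d1])) V1 S)" for S
  proof (cases "atom_type V0 d0 = S")
    case True
    with assms(2,3) same_type
    have "d0 \<in> type_set (D0 - set s0) V0 S" "d1 \<in> type_set (D1 - set s1) V1 S"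
      unfolding type_set_def by auto
    with True same_type show ?thesis
      using count_equiv_Suc_Diff[OF counts] by (simp add: type_set_Diff_insert)
  next
    case False
    with same_type show ?thesis
      using count_equiv_Suc_imp[OF counts] by (simp add: type_set_Diff_insert)
  qed
  ultimately show ?thesis
    using pos assms(2,3) unfolding sim_position_def sim_inf_iff_count_equiv by auto
qed

lemma sim_position_snoc_repeat:
  assumes pos: "sim_position (Suc n) D0 V0 D1 V1 s0 s1" and "i < length s0"
  shows "sim_position n D0 V0 D1 V1 (s0 @ [s0 ! i]) (s1 @ [s1 ! i])"
proof -
  have iso: "part_iso V0 V1 s0 s1" using pos unfolding sim_position_def by blast
  with \<open>i < length s0\<close> have "part_iso V0 V1 (s0 @ [s0 ! i]) (s1 @ [s1 ! i])"
    by (intro part_iso_snoc) (auto simp: part_iso_def atom_type_def)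
  moreover have "s1 ! i \<in> set s1"
    using iso \<open>i < length s0\<close> unfolding part_iso_def by simp
  ultimately show ?thesis
    using pos \<open>i < length s0\<close> sim_inf_Suc_imp unfolding sim_position_def
    by (auto simp: insert_absorb)
qed

lemma sim_position_first_order_answer:
  assumes pos: "sim_position (Suc n) D0 V0 D1 V1 s0 s1" and "d0 \<in> D0"
  shows "\<exists>d1\<in>D1. sim_position n D0 V0 D1 V1 (s0 @ [d0]) (s1 @ [d1])"
proof (cases "d0 \<in> set s0")
  case True
  then obtain i where i: "i < length s0" "d0 = s0 ! i" by (auto simp: in_set_conv_nth)
  have "length s0 = length s1" "set s1 \<subseteq> D1"
    using pos unfolding sim_position_def part_iso_def by auto
  with i(1) have "s1 ! i \<in> D1" by (auto dest: nth_mem)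
  with sim_position_snoc_repeat[OF pos i(1)] i(2) show ?thesis by blast
next
  case False
  let ?S = "atom_type V0 d0"
  have "count_equiv (Suc n) (type_set (D0 - set s0) V0 ?S) (type_set (D1 - set s1) V1 ?S)"
    using pos unfolding sim_position_def sim_inf_iff_count_equiv by blast
  moreover have "d0 \<in> type_set (D0 - set s0) V0 ?S"
    using False \<open>d0 \<in> D0\<close> unfolding type_set_def by simp
  ultimately obtain d1 where d1: "d1 \<in> type_set (D1 - set s1) V1 ?S"
    using count_equiv_Suc_nonempty by (metis ex_in_conv)
  then have "d1 \<in> D1 - set s1" "atom_type V0 d0 = atom_type V1 d1"
    unfolding type_set_def by auto
  with sim_position_snoc_fresh[OF pos] False \<open>d0 \<in> D0\<close> show ?thesis by blast
qed

lemma sim_position_second_order_answer: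
  fixes V0 :: "'a::finite \<Rightarrow> 'd set"
  assumes pos: "sim_position (Suc n) D0 V0 D1 V1 s0 s1" and "X0 \<subseteq> D0" "infinite X0"
  shows "\<exists>X1. X1 \<subseteq> D1 \<and> infinite X1 \<and>
           (\<forall>d1\<in>X1. \<exists>d0\<in>X0. sim_position n D0 V0 D1 V1 (s0 @ [d0]) (s1 @ [d1]))"
proof -
  from \<open>infinite X0\<close> have "infinite (X0 - set s0)" by (simp add: Diff_infinite_finite)
  then obtain S where S: "infinite {d\<in>X0 - set s0. atom_type V0 d = S}"
    using infinite_ex_infinite_atom_type by blast
  have "count_equiv (Suc n) (type_set (D0 - set s0) V0 S) (type_set (D1 - set s1) V1 S)"
    using pos unfolding sim_position_def sim_inf_iff_count_equiv by blast
  moreover have "{d\<in>X0 - set s0. atom_type V0 d = S} \<subseteq> type_set (D0 - set s0) V0 S"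
    using \<open>X0 \<subseteq> D0\<close> unfolding type_set_def by auto
  ultimately have "infinite (type_set (D1 - set s1) V1 S)"
    using S count_equiv_infinite infinite_super by blast
  moreover obtain e where "e \<in> X0 - set s0" "atom_type V0 e = S"
    using S infinite_imp_nonempty by blast
  ultimately show ?thesis
    using sim_position_snoc_fresh[OF pos, of e] \<open>X0 \<subseteq> D0\<close>
    by (intro exI[of _ "type_set (D1 - set s1) V1 S"]) (auto simp: type_set_def)
qed

lemma sim_position_forth:
  fixes V0 :: "'a::finite \<Rightarrow> 'd set"
  assumes "sim_position (Suc n) D0 V0 D1 V1 s0 s1"
  shows "forth (\<lambda>d0 d1. sim_position n D0 V0 D1 V1 (s0 @ [d0]) (s1 @ [d1])) D0 D1"
  unfolding forth_def
  using sim_position_first_order_answer[OF assms] sim_position_second_order_answer[OF assms]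
  by blast

lemma sim_position_imp_ewins:
  fixes V0 :: "'a::finite \<Rightarrow> 'd set"
  shows "sim_position n D0 V0 D1 V1 s0 s1 \<Longrightarrow> ewins D0 V0 D1 V1 n s0 s1"
proof (induction n arbitrary: s0 s1)
  case (Suc n)
  let ?G = "\<lambda>d0 d1. sim_position n D0 V0 D1 V1 (s0 @ [d0]) (s1 @ [d1])"
  have "forth ?G D0 D1"
    using sim_position_forth[OF Suc.prems] .
  moreover have "forth (\<lambda>d1 d0. ?G d0 d1) D1 D0"
    using sim_position_forth[OF sim_position_sym[OF Suc.prems]]
    by (rule forth_mono) (rule sim_position_sym)
  ultimately have "back_and_forth ?G D0 D1"
    unfolding back_and_forth_def ..
  then show ?case
    unfolding ewins_Suc_iff_back_and_forth
    by (rule back_and_forth_mono) (simp add: Suc.IH sim_position_def)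
qed simp

section \<open>A winning strategy preserves formulas\<close>

definition assignments_from_positions ::
  "nat set \<Rightarrow> 'd list \<Rightarrow> 'e list \<Rightarrow> (nat \<Rightarrow> 'd) \<Rightarrow> (nat \<Rightarrow> 'e) \<Rightarrow> bool" where
  "assignments_from_positions X s0 s1 g0 g1 \<longleftrightarrow>
     (\<forall>x\<in>X. \<exists>i<length s0. g0 x = s0 ! i \<and> g1 x = s1 ! i)"

lemma assignments_from_positions_snoc:
  assumes "assignments_from_positions (X - {x}) s0 s1 g0 g1" and "length s0 = length s1"
  shows "assignments_from_positions X (s0 @ [d0]) (s1 @ [d1]) (g0(x := d0)) (g1(x := d1))"
  unfolding assignments_from_positions_def
proof
  fix y assume "y \<in> X"
  show "\<exists>i<length (s0 @ [d0]). (g0(x := d0)) y = (s0 @ [d0]) ! i \<and> (g1(x := d1)) y = (s1 @ [d1]) ! i"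
  proof (cases "y = x")
    case True
    with assms(2) show ?thesis by (intro exI[of _ "length s0"]) (simp add: nth_append)
  next
    case False
    with assms(1) \<open>y \<in> X\<close> obtain i where "i < length s0" "g0 y = s0 ! i" "g1 y = s1 ! i"
      unfolding assignments_from_positions_def by blast
    with False assms(2) show ?thesis by (intro exI[of _ i]) (auto simp: nth_append)
  qed
qed

lemma ewins_back_and_forth_eval:
  assumes "ewins D0 V0 D1 V1 n s0 s1" and "part_iso V0 V1 s0 s1" and "Suc (qr p) \<le> n"
    and "assignments_from_positions (fv p - {x}) s0 s1 g0 g1"
    and IH: "\<And>n s0' s1' g0' g1'. ewins D0 V0 D1 V1 n s0' s1' \<Longrightarrow> part_iso V0 V1 s0' s1' \<Longrightarrow>
               qr p \<le> n \<Longrightarrow> assignments_from_positions (fv p) s0' s1' g0' g1' \<Longrightarrow>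
               eval D0 V0 g0' p = eval D1 V1 g1' p"
  shows "back_and_forth (\<lambda>d0 d1. eval D0 V0 (g0(x := d0)) p = eval D1 V1 (g1(x := d1)) p) D0 D1"
proof -
  obtain m where m: "n = Suc m" "qr p \<le> m"
    using assms(3) by (cases n) auto
  have "length s0 = length s1"
    using assms(2) unfolding part_iso_def by blast
  from assms(1) m(1) have "back_and_forth (\<lambda>d0 d1. part_iso V0 V1 (s0 @ [d0]) (s1 @ [d1])
      \<and> ewins D0 V0 D1 V1 m (s0 @ [d0]) (s1 @ [d1])) D0 D1"
    using ewins_Suc_iff_back_and_forth by blast
  then show ?thesis
    by (rule back_and_forth_mono)
      (use IH m(2) assignments_from_positions_snoc[OF assms(4) \<open>length s0 = length s1\<close>] in blast)
qed

lemma ewins_imp_eval_eq: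
  "ewins D0 V0 D1 V1 n s0 s1 \<Longrightarrow> part_iso V0 V1 s0 s1 \<Longrightarrow> qr p \<le> n \<Longrightarrow>
   assignments_from_positions (fv p) s0 s1 g0 g1 \<Longrightarrow> eval D0 V0 g0 p = eval D1 V1 g1 p"
proof (induction p arbitrary: n s0 s1 g0 g1)
  case (Conj p q)
  have "eval D0 V0 g0 p = eval D1 V1 g1 p"
    using Conj.prems by (intro Conj.IH(1)) (auto simp: assignments_from_positions_def)
  moreover have "eval D0 V0 g0 q = eval D1 V1 g1 q"
    using Conj.prems by (intro Conj.IH(2)) (auto simp: assignments_from_positions_def)
  ultimately show ?case by simp
next
  case (Disj p q)
  have "eval D0 V0 g0 p = eval D1 V1 g1 p"
    using Disj.prems by (intro Disj.IH(1)) (auto simp: assignments_from_positions_def)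
  moreover have "eval D0 V0 g0 q = eval D1 V1 g1 q"
    using Disj.prems by (intro Disj.IH(2)) (auto simp: assignments_from_positions_def)
  ultimately show ?case by simp
next
  case (Ex x p)
  have "back_and_forth (\<lambda>d0 d1. eval D0 V0 (g0(x := d0)) p = eval D1 V1 (g1(x := d1)) p) D0 D1"
    by (rule ewins_back_and_forth_eval[OF Ex.prems(1,2) _ _ Ex.IH]) (use Ex.prems(3,4) in simp_all)
  then show ?case by (simp add: back_and_forth_quantifiers)
next
  case (All x p)
  have "back_and_forth (\<lambda>d0 d1. eval D0 V0 (g0(x := d0)) p = eval D1 V1 (g1(x := d1)) p) D0 D1"
    by (rule ewins_back_and_forth_eval[OF All.prems(1,2) _ _ All.IH]) (use All.prems(3,4) in simp_all)
  then show ?case by (simp add: back_and_forth_quantifiers)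
next
  case (ExInf x p)
  have "back_and_forth (\<lambda>d0 d1. eval D0 V0 (g0(x := d0)) p = eval D1 V1 (g1(x := d1)) p) D0 D1"
    by (rule ewins_back_and_forth_eval[OF ExInf.prems(1,2) _ _ ExInf.IH]) (use ExInf.prems(3,4) in simp_all)
  then show ?case by (simp add: back_and_forth_quantifiers)
next
  case (AllInf x p)
  have "back_and_forth (\<lambda>d0 d1. eval D0 V0 (g0(x := d0)) p = eval D1 V1 (g1(x := d1)) p) D0 D1"
    by (rule ewins_back_and_forth_eval[OF AllInf.prems(1,2) _ _ AllInf.IH]) (use AllInf.prems(3,4) in simp_all)
  then show ?case by (simp add: back_and_forth_quantifiers)
qed (auto simp: part_iso_def assignments_from_positions_def)

section \<open>Sentences counting a type\<close>

definition conj_list :: "'a fml list \<Rightarrow> 'a fml" where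
  "conj_list ps = foldr Conj ps FTrue"

lemma eval_conj_list: "eval D V g (conj_list ps) \<longleftrightarrow> (\<forall>p\<in>set ps. eval D V g p)"
  unfolding conj_list_def by (induction ps) simp_all

lemma fv_conj_list: "fv (conj_list ps) = (\<Union>p\<in>set ps. fv p)"
  unfolding conj_list_def by (induction ps) simp_all

lemma qr_conj_list: "(\<And>p. p \<in> set ps \<Longrightarrow> qr p = 0) \<Longrightarrow> qr (conj_list ps) = 0"
  unfolding conj_list_def by (induction ps) simp_all

text \<open>Any enumeration of the finite alphabet will do.\<close>

definition type_fml :: "'a::finite set \<Rightarrow> nat \<Rightarrow> 'a fml" where
  "type_fml S x = conj_list (map (\<lambda>a. if a \<in> S then Pred a x else NPred a x) (SOME as. set as = UNIV))"

lemma eval_type_fml: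
  fixes S :: "'a::finite set"
  shows "eval D V g (type_fml S x) \<longleftrightarrow> atom_type V (g x) = S"
proof -
  have "set (SOME as. set as = (UNIV :: 'a set)) = UNIV"
    by (rule someI_ex) (rule finite_list[OF finite_UNIV])
  then have "eval D V g (type_fml S x) \<longleftrightarrow> (\<forall>a. g x \<in> V a \<longleftrightarrow> a \<in> S)"
    unfolding type_fml_def eval_conj_list set_map ball_simps(9)
    by (simp add: if_distrib[of "eval D V g"]) meson
  then show ?thesis
    unfolding atom_type_def by blast
qed

lemma fv_type_fml: "fv (type_fml S x) \<subseteq> {x}"
  unfolding type_fml_def fv_conj_list set_map by (auto split: if_split_asm)

lemma qr_type_fml: "qr (type_fml S x) = 0"
  unfolding type_fml_def by (rule qr_conj_list) (auto split: if_split_asm)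

definition fresh_fml :: "nat \<Rightarrow> 'a fml" where
  "fresh_fml j = conj_list (map (\<lambda>l. NEq l j) [0..<j])"

lemma eval_fresh_fml: "eval D V g (fresh_fml j) \<longleftrightarrow> g j \<notin> g ` {..<j}"
  unfolding fresh_fml_def eval_conj_list by (auto simp: image_iff) (metis lessThan_iff)

lemma fv_fresh_fml: "fv (fresh_fml j) \<subseteq> {..j}"
  unfolding fresh_fml_def fv_conj_list by auto

lemma qr_fresh_fml: "qr (fresh_fml j) = 0"
  unfolding fresh_fml_def by (rule qr_conj_list) auto

fun at_least_fml :: "'a::finite set \<Rightarrow> nat \<Rightarrow> nat \<Rightarrow> 'a fml" where
  "at_least_fml S j 0 = FTrue"
| "at_least_fml S j (Suc m) =
     Ex j (Conj (type_fml S j) (Conj (fresh_fml j) (at_least_fml S (Suc j) m)))"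

lemma fv_at_least_fml: "fv (at_least_fml S j m) \<subseteq> {..<j}"
proof (induction m arbitrary: j)
  case (Suc m)
  have "fv (at_least_fml S j (Suc m)) \<subseteq> ({j} \<union> {..j} \<union> {..<Suc j}) - {j}"
    using Suc.IH[of "Suc j"] fv_type_fml[of S j] fv_fresh_fml[of j] by auto
  also have "\<dots> = {..<j}" by auto
  finally show ?case .
qed simp

lemma qr_at_least_fml: "qr (at_least_fml S j m) = m"
  by (induction m arbitrary: j) (simp_all add: qr_type_fml qr_fresh_fml)

lemma ex_subset_card_Suc_iff:
  "(\<exists>F\<subseteq>C. finite F \<and> card F = Suc m) \<longleftrightarrow> (\<exists>d\<in>C. \<exists>F\<subseteq>C - {d}. finite F \<and> card F = m)"
proof
  assume "\<exists>F\<subseteq>C. finite F \<and> card F = Suc m"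
  then obtain F where "F \<subseteq> C" "finite F" "card F = Suc m" by blast
  then obtain d where "d \<in> F" by (metis card.empty ex_in_conv nat.distinct(1))
  with \<open>F \<subseteq> C\<close> \<open>finite F\<close> \<open>card F = Suc m\<close> show "\<exists>d\<in>C. \<exists>F\<subseteq>C - {d}. finite F \<and> card F = m"
    by (intro bexI[of _ d] exI[of _ "F - {d}"]) auto
next
  assume "\<exists>d\<in>C. \<exists>F\<subseteq>C - {d}. finite F \<and> card F = m"
  then obtain d F where "d \<in> C" "F \<subseteq> C - {d}" "finite F" "card F = m" by blast
  moreover from \<open>F \<subseteq> C - {d}\<close> have "d \<notin> F" by blast
  ultimately show "\<exists>F\<subseteq>C. finite F \<and> card F = Suc m"
    by (intro exI[of _ "insert d F"]) auto
qed

lemma ex_subset_card_iff: "(\<exists>F\<subseteq>C. finite F \<and> card F = m) \<longleftrightarrow> infinite C \<or> m \<le> card C"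
proof
  assume "\<exists>F\<subseteq>C. finite F \<and> card F = m"
  then show "infinite C \<or> m \<le> card C" using card_mono by blast
next
  assume m: "infinite C \<or> m \<le> card C"
  show "\<exists>F\<subseteq>C. finite F \<and> card F = m"
  proof (cases "finite C")
    case True
    with m obtain F where "F \<subseteq> C" "card F = m" by (metis obtain_subset_with_card_n)
    with True show ?thesis using finite_subset by blast
  qed (use infinite_arbitrarily_large in blast)
qed

lemma eval_at_least_fml:
  "eval D V g (at_least_fml S j m) \<longleftrightarrow>
     (\<exists>F\<subseteq>type_set D V S - g ` {..<j}. finite F \<and> card F = m)"
proof (induction m arbitrary: j g)
  case 0
  have "\<exists>F\<subseteq>type_set D V S - g ` {..<j}. finite F \<and> card F = 0"
    by (intro exI[of _ "{}"]) simp
  then show ?case by simp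
next
  case (Suc m)
  have "(g(j := d)) ` {..<Suc j} = insert d (g ` {..<j})" for d
    by (auto simp: lessThan_Suc)
  then have "eval D V g (at_least_fml S j (Suc m)) \<longleftrightarrow>
      (\<exists>d\<in>D. atom_type V d = S \<and> d \<notin> g ` {..<j} \<and>
         (\<exists>F\<subseteq>type_set D V S - insert d (g ` {..<j}). finite F \<and> card F = m))"
    by (simp add: Suc.IH eval_type_fml eval_fresh_fml)
  also have "\<dots> \<longleftrightarrow> (\<exists>d\<in>type_set D V S - g ` {..<j}.
         \<exists>F\<subseteq>type_set D V S - g ` {..<j} - {d}. finite F \<and> card F = m)"
  proof -
    have "d \<in> type_set D V S - g ` {..<j} \<longleftrightarrow> d \<in> D \<and> atom_type V d = S \<and> d \<notin> g ` {..<j}"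
      for d
      unfolding type_set_def by simp
    then show ?thesis by (simp only: Diff_insert[symmetric] Bex_def conj_assoc)
  qed
  also have "\<dots> \<longleftrightarrow> (\<exists>F\<subseteq>type_set D V S - g ` {..<j}. finite F \<and> card F = Suc m)"
    by (rule ex_subset_card_Suc_iff[symmetric])
  finally show ?case .
qed

lemma sat_at_least_fml:
  "sat D V (at_least_fml S 0 m) \<longleftrightarrow> infinite (type_set D V S) \<or> m \<le> card (type_set D V S)"
  unfolding sat_def eval_at_least_fml ex_subset_card_iff by simp

lemma sentence_at_least_fml: "sentence (at_least_fml S 0 m)"
  using fv_at_least_fml[of S 0 m] unfolding sentence_def by simp

lemma sat_ExInf_type_fml: "sat D V (ExInf 0 (type_fml S 0)) \<longleftrightarrow> infinite (type_set D V S)"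
  unfolding sat_def type_set_def by (simp add: eval_type_fml)

lemma sentence_ExInf_type_fml: "sentence (ExInf 0 (type_fml S 0))"
  using fv_type_fml[of S 0] unfolding sentence_def by auto

lemma same_sentences_imp_sim_inf:
  fixes V0 :: "'a::finite \<Rightarrow> 'd set" and V1 :: "'a \<Rightarrow> 'e set"
  assumes same: "\<And>p :: 'a fml. sentence p \<Longrightarrow> qr p \<le> k \<Longrightarrow> sat D0 V0 p \<longleftrightarrow> sat D1 V1 p"
  shows "sim_inf k D0 V0 D1 V1"
proof (cases "k = 0")
  case False
  have "count_equiv k (type_set D0 V0 S) (type_set D1 V1 S)" for S
  proof (rule count_equivI)
    show "infinite (type_set D0 V0 S) \<longleftrightarrow> infinite (type_set D1 V1 S)"
      using same[OF sentence_ExInf_type_fml, of S] False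
      by (simp add: sat_ExInf_type_fml qr_type_fml)
    show "infinite (type_set D0 V0 S) \<or> m \<le> card (type_set D0 V0 S) \<longleftrightarrow>
          infinite (type_set D1 V1 S) \<or> m \<le> card (type_set D1 V1 S)" if "m \<le> k" for m
      using same[OF sentence_at_least_fml, of S m] that
      by (simp add: sat_at_least_fml qr_at_least_fml)
  qed
  then show ?thesis unfolding sim_inf_iff_count_equiv by blast
qed (simp add: sim_inf_def)

lemma ewins_imp_sat_eq:
  assumes "ewins D0 V0 D1 V1 k [] []" and "sentence p" and "qr p \<le> k"
  shows "sat D0 V0 p \<longleftrightarrow> sat D1 V1 p"
proof -
  have "eval D0 V0 g0 p = eval D1 V1 g1 p" for g0 g1
    using assms by (intro ewins_imp_eval_eq)
      (auto simp: part_iso_def assignments_from_positions_def sentence_def)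
  then show ?thesis unfolding sat_def by blast
qed

theorem proposition3p10:
  fixes k :: nat
    and D0 :: "'d set" and V0 :: "'a::finite \<Rightarrow> 'd set"
    and D1 :: "'e set" and V1 :: "'a \<Rightarrow> 'e set"
  assumes "monadic_model D0 V0" and "monadic_model D1 V1"
  shows "((\<forall>p :: 'a fml. sentence p \<and> qr p \<le> k \<longrightarrow> (sat D0 V0 p \<longleftrightarrow> sat D1 V1 p))
            \<longleftrightarrow> sim_inf k D0 V0 D1 V1)
       \<and> (sim_inf k D0 V0 D1 V1 \<longleftrightarrow> EF_inf_exists_wins k D0 V0 D1 V1)"
proof -
  have sim_imp_wins: "EF_inf_exists_wins k D0 V0 D1 V1" if "sim_inf k D0 V0 D1 V1"
  proof -
    from that have "sim_position k D0 V0 D1 V1 [] []"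
      unfolding sim_position_def part_iso_def by simp
    then show ?thesis
      unfolding EF_inf_exists_wins_def by (rule sim_position_imp_ewins)
  qed
  have wins_imp_same: "\<forall>p :: 'a fml. sentence p \<and> qr p \<le> k \<longrightarrow> (sat D0 V0 p \<longleftrightarrow> sat D1 V1 p)"
    if "EF_inf_exists_wins k D0 V0 D1 V1"
    using that ewins_imp_sat_eq unfolding EF_inf_exists_wins_def by blast
  show ?thesis
    using sim_imp_wins wins_imp_same same_sentences_imp_sim_inf by blast
qed

end
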